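(* For every integer $m\geq 1$, let \[F_m(q)=1+\sum_{k=1}^{m-1}(-1)^k\prod_{i=0}^{k-1}\left(\frac{1}{q^{m-1-i}}-1\right).\] Then, as formal Laurent series in $q$, \[\sum_{n=1}^{\infty}a_m(n)q^n=\frac{F_m(q)}{(q;q)_\infty}-\mathcal{D}_m,\] where $\mathcal{D}_m$ is the sum of the terms with exponent of $q$ less than or equal to $0$ in the Laurent expansion of $F_m(q)/(q;q)_\infty$.
   Context: $a_m(n)$ is the number of partitions of $n$ in which the smallest part occurs at least $m$ times. $(a;q)_\infty=\prod_{i\geq 0}(1-aq^i)$, so $1/(q;q)_\infty=\sum_{n\geq0}p(n)q^n$ with $p(n)$ the number of partitions of $n$. Empty sums are $0$ and empty products are $1$. *)

theory Defs
  imports "HOL-Library.Multiset" "HOL-Computational_Algebra.Formal_Laurent_Series"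
begin

definition int_partitions :: "nat \<Rightarrow> nat multiset set" where
  "int_partitions n = {P. (\<forall>x\<in>#P. 0 < x) \<and> sum_mset P = n}"

definition a_m :: "nat \<Rightarrow> nat \<Rightarrow> nat" where
  "a_m m n = card {P \<in> int_partitions n. P \<noteq> {#} \<and> m \<le> count P (Min (set_mset P))}"

text \<open>(q;q)_infinity = prod_{i>=0} (1 - q q^i) as a formal power series:
  the n-th coefficient is that of the (stable) finite product over i < n.\<close>
definition qq_inf :: "rat fps" where
  "qq_inf = Abs_fps (\<lambda>n. (\<Prod>i<n. 1 - fps_X * fps_X ^ i) $ n)"

definition F_m :: "nat \<Rightarrow> rat fls" where
  "F_m m = 1 + (\<Sum>k=1..m-1. (-1) ^ k * (\<Prod>i=0..k-1. fls_X_inv ^ (m - 1 - i) - 1))"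

definition G_m :: "nat \<Rightarrow> rat fls" where
  "G_m m = F_m m / fps_to_fls qq_inf"

definition D_m :: "nat \<Rightarrow> rat fls" where
  "D_m m = Abs_fls (\<lambda>n. if n \<le> 0 then fls_nth (G_m m) n else 0)"

end

theory Submission
  imports Defs
begin

text \<open>
  Euler's product gives 1/(q;q)_inf = P(q) = sum p(n) q^n (the partial product over i < N inverts
  the generating function of partitions into parts at most N, and both stabilise coefficientwise),
  so G_m = F_m P. The polynomials in 1/q satisfy F_(m+1) = 1 - (q^(-m) - 1) F_m, i.e. on coefficients
  G_(m+1)[n] = p(n) + G_m[n] - G_m[n + m]. The numbers a_m(n) obey the same recurrence: in a
  partition of n + m whose smallest part s occurs at least m times, either s = 1 and removing m
  ones leaves an arbitrary partition of n, or s > 1 and lowering m copies of s to s - 1 leaves a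
  partition of n whose smallest part occurs exactly m times; there are a_m(n) - a_(m+1)(n) of
  these. As a_1(n) = p(n) = G_1[n] for n > 0, induction on m gives G_m[n] = a_m(n) for n > 0.
\<close>

unbundle fps_syntax

lemma mem_le_sum_mset:
  fixes x :: "'a::canonically_ordered_monoid_add"
  shows "x \<in># M \<Longrightarrow> x \<le> sum_mset M"
  by (induction M) (auto intro: add_increasing2 add_increasing)

lemma size_le_sum_mset: "\<forall>x\<in>#M. 0 < (x::nat) \<Longrightarrow> size M \<le> sum_mset M"
  by (induction M) auto

lemma finite_int_partitions: "finite (int_partitions n)"
proof -
  have "int_partitions n \<subseteq> mset ` {xs. set xs \<subseteq> {0..n} \<and> length xs \<le> n}"
  proof
    fix P assume "P \<in> int_partitions n"
    then have pos: "\<forall>x\<in>#P. 0 < x" and sum: "sum_mset P = n"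
      by (auto simp: int_partitions_def)
    have "set (sorted_list_of_multiset P) \<subseteq> {0..n}"
      using mem_le_sum_mset[of _ P] sum by auto
    moreover have "length (sorted_list_of_multiset P) \<le> n"
      using size_le_sum_mset[OF pos] sum by (metis mset_sorted_list_of_multiset size_mset)
    ultimately show "P \<in> mset ` {xs. set xs \<subseteq> {0..n} \<and> length xs \<le> n}"
      by (intro image_eqI[of _ _ "sorted_list_of_multiset P"]) auto
  qed
  then show ?thesis
    by (rule finite_subset) (intro finite_imageI finite_lists_length_le, simp)
qed

definition bounded_partitions :: "nat \<Rightarrow> nat \<Rightarrow> nat multiset set" where
  "bounded_partitions N n = {P \<in> int_partitions n. \<forall>x\<in>#P. x \<le> N}"

lemma bounded_partitions_0: "bounded_partitions 0 n = (if n = 0 then {{#}} else {})"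
proof -
  have "P \<in> bounded_partitions 0 n \<longleftrightarrow> P = {#} \<and> n = 0" for P
    by (cases P) (auto simp: bounded_partitions_def int_partitions_def)
  then show ?thesis
    by auto
qed

lemma bounded_partitions_eq_int_partitions:
  "n \<le> N \<Longrightarrow> bounded_partitions N n = int_partitions n"
  unfolding bounded_partitions_def int_partitions_def
  using mem_le_sum_mset[where 'a=nat] order.trans by blast

lemma finite_bounded_partitions: "finite (bounded_partitions N n)"
  using finite_int_partitions by (simp add: bounded_partitions_def)

lemma card_bounded_partitions_Suc:
  "card (bounded_partitions (Suc N) n) = card (bounded_partitions N n)
     + (if Suc N \<le> n then card (bounded_partitions (Suc N) (n - Suc N)) else 0)"
proof -
  let ?with = "{P \<in> bounded_partitions (Suc N) n. Suc N \<in># P}"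
  have split: "bounded_partitions (Suc N) n = bounded_partitions N n \<union> ?with"
    by (auto simp: bounded_partitions_def le_Suc_eq)
  have disjoint: "bounded_partitions N n \<inter> ?with = {}"
    by (auto simp: bounded_partitions_def)
  have "card (bounded_partitions (Suc N) n) = card (bounded_partitions N n \<union> ?with)"
    using split by (rule arg_cong)
  also have "\<dots> = card (bounded_partitions N n) + card ?with"
    using disjoint by (simp add: card_Un_disjoint finite_bounded_partitions)
  also have "card ?with
              = (if Suc N \<le> n then card (bounded_partitions (Suc N) (n - Suc N)) else 0)"
  proof (cases "Suc N \<le> n")
    case True
    have "?with = add_mset (Suc N) ` bounded_partitions (Suc N) (n - Suc N)"
    proof (intro equalityI subsetI)
      fix P assume P: "P \<in> ?with"
      then have "P = add_mset (Suc N) (P - {#Suc N#})" by simp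
      moreover have "P - {#Suc N#} \<in> bounded_partitions (Suc N) (n - Suc N)"
        using P by (auto simp: bounded_partitions_def int_partitions_def sum_mset.remove
            dest: in_diffD)
      ultimately show "P \<in> add_mset (Suc N) ` bounded_partitions (Suc N) (n - Suc N)"
        by blast
    qed (use True in \<open>auto simp: bounded_partitions_def int_partitions_def\<close>)
    then show ?thesis using True by (simp add: card_image inj_on_def)
  next
    case False
    have empty: "?with = {}"
    proof (intro equals0I)
      fix P assume "P \<in> ?with"
      then have "Suc N \<le> n"
        using mem_le_sum_mset[of "Suc N" P]
        by (simp add: bounded_partitions_def int_partitions_def)
      with False show False ..
    qed
    show ?thesis
      using False by (simp only: empty card.empty if_False)
  qed
  finally show ?thesis .
qed

definition bounded_partition_fps :: "nat \<Rightarrow> 'a::comm_ring_1 fps" where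
  "bounded_partition_fps N = Abs_fps (\<lambda>n. of_nat (card (bounded_partitions N n)))"

definition partition_fps :: "'a::comm_ring_1 fps" where
  "partition_fps = Abs_fps (\<lambda>n. of_nat (card (int_partitions n)))"

lemma prod_one_minus_X_power_mult_bounded_partition_fps:
  "(\<Prod>i<N. 1 - fps_X * fps_X ^ i) * bounded_partition_fps N = (1 :: 'a::comm_ring_1 fps)"
proof (induction N)
  case 0
  show ?case
    by (auto simp: bounded_partition_fps_def bounded_partitions_0 intro!: fps_ext)
next
  case (Suc N)
  have step: "(1 - fps_X ^ Suc N) * bounded_partition_fps (Suc N)
               = (bounded_partition_fps N :: 'a fps)"
    by (rule fps_ext)
      (simp add: algebra_simps fps_X_power_mult_nth bounded_partition_fps_def
        card_bounded_partitions_Suc[of N]; arith)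
  have "(\<Prod>i<Suc N. 1 - fps_X * fps_X ^ i) * bounded_partition_fps (Suc N)
        = (\<Prod>i<N. 1 - fps_X * fps_X ^ i)
            * ((1 - fps_X ^ Suc N) * (bounded_partition_fps (Suc N) :: 'a fps))"
    by (simp add: mult_ac)
  with Suc.IH show ?case
    by (simp only: step)
qed

lemma nth_prod_one_minus_X_power_stable:
  "j \<le> N \<Longrightarrow> (\<Prod>i<N. 1 - fps_X * fps_X ^ i :: 'a::comm_ring_1 fps) $ j
                = (\<Prod>i<j. 1 - fps_X * fps_X ^ i :: 'a fps) $ j"
proof (induction N rule: dec_induct)
  case (step M)
  let ?Pr = "\<Prod>i<M. 1 - fps_X * fps_X ^ i :: 'a fps"
  have "(\<Prod>i<Suc M. 1 - fps_X * fps_X ^ i) = ?Pr - fps_X ^ Suc M * ?Pr"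
    by (simp add: algebra_simps)
  moreover have "(fps_X ^ Suc M * ?Pr) $ j = 0"
    using step by (simp only: fps_X_power_mult_nth) simp
  ultimately show ?case
    using step by simp
qed simp

lemma qq_inf_mult_partition_fps: "qq_inf * partition_fps = 1"
proof (rule fps_ext)
  fix n
  let ?Pr = "\<Prod>i<n. 1 - fps_X * fps_X ^ i :: rat fps"
  have "(qq_inf * partition_fps) $ n = (?Pr * bounded_partition_fps n) $ n"
    unfolding fps_mult_nth
    by (intro sum.cong refl)
      (simp add: qq_inf_def partition_fps_def bounded_partition_fps_def
        nth_prod_one_minus_X_power_stable[of _ n] bounded_partitions_eq_int_partitions)
  then show "(qq_inf * partition_fps) $ n = 1 $ n"
    by (simp add: prod_one_minus_X_power_mult_bounded_partition_fps)
qed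

lemma Min_add_replicate_mset:
  fixes t :: "'a::linorder"
  assumes "k \<noteq> 0" and "\<forall>x\<in>#R. t \<le> x"
  shows "Min (set_mset (R + replicate_mset k t)) = t"
  using assms by (intro Min_eqI) auto

definition min_mult_ge_partitions :: "nat \<Rightarrow> nat \<Rightarrow> nat multiset set" where
  "min_mult_ge_partitions k n =
     {P \<in> int_partitions n. P \<noteq> {#} \<and> k \<le> count P (Min (set_mset P))}"

definition min_mult_eq_partitions :: "nat \<Rightarrow> nat \<Rightarrow> nat multiset set" where
  "min_mult_eq_partitions k n =
     {P \<in> int_partitions n. P \<noteq> {#} \<and> count P (Min (set_mset P)) = k}"

lemma a_m_eq_card: "a_m k n = card (min_mult_ge_partitions k n)"
  by (simp add: a_m_def min_mult_ge_partitions_def)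

lemma a_m_eq_a_m_Suc_add: "a_m k n = a_m (Suc k) n + card (min_mult_eq_partitions k n)"
proof -
  have "min_mult_ge_partitions k n
          = min_mult_ge_partitions (Suc k) n \<union> min_mult_eq_partitions k n"
    by (auto simp: min_mult_ge_partitions_def min_mult_eq_partitions_def)
  moreover have "min_mult_ge_partitions (Suc k) n \<inter> min_mult_eq_partitions k n = {}"
    by (auto simp: min_mult_ge_partitions_def min_mult_eq_partitions_def)
  moreover have "finite (min_mult_ge_partitions (Suc k) n)" "finite (min_mult_eq_partitions k n)"
    using finite_int_partitions
    by (simp_all add: min_mult_ge_partitions_def min_mult_eq_partitions_def)
  ultimately show ?thesis
    by (simp add: a_m_eq_card card_Un_disjoint)
qed

lemma add_replicate_mset_mem_min_mult_ge_partitions: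
  assumes "k \<noteq> 0" and "0 < t" and "\<forall>x\<in>#R. t \<le> x"
  shows "R + replicate_mset k t \<in> min_mult_ge_partitions k (sum_mset R + k * t)"
proof -
  have "\<forall>x\<in>#R + replicate_mset k t. 0 < x"
    using assms(2,3) by auto
  then show ?thesis
    using assms(1)
    unfolding min_mult_ge_partitions_def int_partitions_def mem_Collect_eq
      Min_add_replicate_mset[OF assms(1,3)]
    by simp
qed

lemma add_replicate_mset_mem_min_mult_eq_partitions:
  assumes "k \<noteq> 0" and "0 < t" and "\<forall>x\<in>#R. t < x"
  shows "R + replicate_mset k t \<in> min_mult_eq_partitions k (sum_mset R + k * t)"
proof -
  have "\<forall>x\<in>#R. t \<le> x"
    using assms(3) by auto
  then have "R + replicate_mset k t \<in> min_mult_ge_partitions k (sum_mset R + k * t)"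
    by (rule add_replicate_mset_mem_min_mult_ge_partitions[OF assms(1,2)])
  moreover have "count R t = 0"
    using assms(3) by (auto simp: count_eq_zero_iff)
  ultimately show ?thesis
    unfolding min_mult_ge_partitions_def min_mult_eq_partitions_def mem_Collect_eq
      Min_add_replicate_mset[OF assms(1) \<open>\<forall>x\<in>#R. t \<le> x\<close>]
    by simp
qed

lemma min_mult_ge_partitionsE:
  assumes "P \<in> min_mult_ge_partitions k n"
  obtains R t where "P = R + replicate_mset k t" and "t = Min (set_mset P)" and "0 < t"
    and "\<forall>x\<in>#R. t \<le> x" and "sum_mset R + k * t = n"
proof
  define t where "t = Min (set_mset P)"
  define R where "R = P - replicate_mset k t"
  have nonempty: "P \<noteq> {#}" and mult: "k \<le> count P t" and pos: "\<forall>x\<in>#P. 0 < x"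
    and sum: "sum_mset P = n"
    using assms by (auto simp: min_mult_ge_partitions_def int_partitions_def t_def)
  show P: "P = R + replicate_mset k t"
    using mult by (simp add: R_def count_le_replicate_mset_subset_eq)
  show "t = Min (set_mset P)"
    by (fact t_def)
  show "0 < t"
    using nonempty pos by (simp add: t_def)
  show "\<forall>x\<in>#R. t \<le> x"
    by (auto simp: R_def t_def dest: in_diffD)
  show "sum_mset R + k * t = n"
    using sum by (simp add: P)
qed

lemma min_mult_eq_partitionsE:
  assumes "P \<in> min_mult_eq_partitions k n"
  obtains R t where "P = R + replicate_mset k t" and "t = Min (set_mset P)" and "0 < t"
    and "\<forall>x\<in>#R. t < x" and "sum_mset R + k * t = n"
proof -
  have "P \<in> min_mult_ge_partitions k n"
    using assms by (simp add: min_mult_ge_partitions_def min_mult_eq_partitions_def)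
  then obtain R t where P: "P = R + replicate_mset k t" and t: "t = Min (set_mset P)"
    and "0 < t" and le: "\<forall>x\<in>#R. t \<le> x" and "sum_mset R + k * t = n"
    by (rule min_mult_ge_partitionsE)
  have "count P t = k"
    using assms t by (simp add: min_mult_eq_partitions_def)
  then have "t \<notin># R"
    using P by (simp add: not_in_iff)
  then have "\<forall>x\<in>#R. t < x"
    using le le_neq_trans by blast
  with P t \<open>0 < t\<close> show thesis
    using \<open>sum_mset R + k * t = n\<close> by (rule that)
qed

lemma card_min_mult_ge_partitions_Min_eq_1:
  assumes "k \<noteq> 0"
  shows "card {P \<in> min_mult_ge_partitions k (n + k). Min (set_mset P) = 1}
           = card (int_partitions n)"
proof -
  let ?f = "\<lambda>Q. Q + replicate_mset k 1"
  let ?g = "\<lambda>P. P - replicate_mset k 1"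
  let ?B = "{P \<in> min_mult_ge_partitions k (n + k). Min (set_mset P) = 1}"
  have f: "?f Q \<in> ?B \<and> ?g (?f Q) = Q" if Q: "Q \<in> int_partitions n" for Q
  proof -
    have ge_1: "\<forall>x\<in>#Q. 1 \<le> x"
      using Q by (auto simp: int_partitions_def Suc_le_eq)
    have "sum_mset Q + k * 1 = n + k"
      using Q by (simp add: int_partitions_def)
    then show ?thesis
      using add_replicate_mset_mem_min_mult_ge_partitions[OF assms _ ge_1]
        Min_add_replicate_mset[OF assms ge_1] by simp
  qed
  have g: "?g P \<in> int_partitions n \<and> ?f (?g P) = P" if P: "P \<in> ?B" for P
  proof -
    from P obtain R t where PR: "P = R + replicate_mset k t" and t: "t = Min (set_mset P)"
      and ge: "\<forall>x\<in>#R. t \<le> x" and sum: "sum_mset R + k * t = n + k"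
      by (auto elim: min_mult_ge_partitionsE)
    have "t = 1"
      using P t by simp
    then show ?thesis
      using PR ge sum by (auto simp: int_partitions_def Suc_le_eq)
  qed
  have "bij_betw ?f (int_partitions n) ?B"
    by (rule bij_betw_byWitness[where f' = ?g]) (use f g in blast)+
  then show ?thesis
    by (simp add: bij_betw_same_card)
qed

lemma card_min_mult_ge_partitions_Min_neq_1:
  assumes "k \<noteq> 0"
  shows "card {P \<in> min_mult_ge_partitions k (n + k). Min (set_mset P) \<noteq> 1}
           = card (min_mult_eq_partitions k n)"
proof -
  let ?f = "\<lambda>Q. Q - replicate_mset k (Min (set_mset Q))
                  + replicate_mset k (Suc (Min (set_mset Q)))"
  let ?g = "\<lambda>P. P - replicate_mset k (Min (set_mset P))
                  + replicate_mset k (Min (set_mset P) - 1)"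
  let ?B = "{P \<in> min_mult_ge_partitions k (n + k). Min (set_mset P) \<noteq> 1}"
  have f: "?f Q \<in> ?B \<and> ?g (?f Q) = Q" if Q: "Q \<in> min_mult_eq_partitions k n" for Q
  proof -
    from Q obtain R t where QR: "Q = R + replicate_mset k t" and t: "t = Min (set_mset Q)"
      and "0 < t" and gt: "\<forall>x\<in>#R. t < x" and sum: "sum_mset R + k * t = n"
      by (rule min_mult_eq_partitionsE)
    have ge: "\<forall>x\<in>#R. Suc t \<le> x"
      using gt by (simp add: Suc_le_eq)
    have fQ: "?f Q = R + replicate_mset k (Suc t)"
      unfolding t[symmetric] by (simp add: QR)
    have "R + replicate_mset k (Suc t) \<in> min_mult_ge_partitions k (sum_mset R + k * Suc t)"
      by (rule add_replicate_mset_mem_min_mult_ge_partitions[OF assms _ ge]) simp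
    also have "sum_mset R + k * Suc t = n + k"
      using sum by simp
    finally have mem: "R + replicate_mset k (Suc t) \<in> min_mult_ge_partitions k (n + k)" .
    have Min_fQ: "Min (set_mset (R + replicate_mset k (Suc t))) = Suc t"
      by (rule Min_add_replicate_mset[OF assms ge])
    show ?thesis
      unfolding fQ mem_Collect_eq Min_fQ using mem \<open>0 < t\<close> by (simp add: QR)
  qed
  have g: "?g P \<in> min_mult_eq_partitions k n \<and> ?f (?g P) = P" if P: "P \<in> ?B" for P
  proof -
    from P obtain R t where PR: "P = R + replicate_mset k t" and t: "t = Min (set_mset P)"
      and "0 < t" and ge: "\<forall>x\<in>#R. t \<le> x" and sum: "sum_mset R + k * t = n + k"
      by (auto elim: min_mult_ge_partitionsE)
    have "t \<noteq> 1"
      using P t by simp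
    with \<open>0 < t\<close> have "0 < t - 1" by simp
    have gt: "\<forall>x\<in>#R. t - 1 < x"
      using ge \<open>0 < t\<close> by auto
    have gP: "?g P = R + replicate_mset k (t - 1)"
      unfolding t[symmetric] by (simp add: PR)
    have "R + replicate_mset k (t - 1)
            \<in> min_mult_eq_partitions k (sum_mset R + k * (t - 1))"
      by (rule add_replicate_mset_mem_min_mult_eq_partitions[OF assms \<open>0 < t - 1\<close> gt])
    also have "sum_mset R + k * (t - 1) = n"
      using sum \<open>0 < t\<close> by (cases t) auto
    finally have mem: "R + replicate_mset k (t - 1) \<in> min_mult_eq_partitions k n" .
    have Min_gP: "Min (set_mset (R + replicate_mset k (t - 1))) = t - 1"
      using gt by (intro Min_add_replicate_mset[OF assms]) auto
    show ?thesis
      unfolding gP Min_gP using mem \<open>0 < t\<close> by (simp add: PR)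
  qed
  have "bij_betw ?f (min_mult_eq_partitions k n) ?B"
    by (rule bij_betw_byWitness[where f' = ?g]) (use f g in blast)+
  then show ?thesis
    by (simp add: bij_betw_same_card)
qed

lemma a_m_recurrence:
  assumes "k \<noteq> 0"
  shows "a_m k (n + k) + a_m (Suc k) n = card (int_partitions n) + a_m k n"
proof -
  let ?A = "min_mult_ge_partitions k (n + k)"
  have "finite ?A"
    using finite_int_partitions by (simp add: min_mult_ge_partitions_def)
  then have "card ?A = card (?A \<inter> {P. Min (set_mset P) = 1})
                        + card (?A - {P. Min (set_mset P) = 1})"
    by (rule card_Int_Diff)
  also have "\<dots> = card (int_partitions n) + card (min_mult_eq_partitions k n)"
    using card_min_mult_ge_partitions_Min_eq_1[OF assms, of n]
      card_min_mult_ge_partitions_Min_neq_1[OF assms, of n]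
    by (simp add: Int_def set_diff_eq)
  finally show ?thesis
    using a_m_eq_a_m_Suc_add[of k n] by (simp add: a_m_eq_card)
qed

lemma a_m_1:
  assumes "n \<noteq> 0"
  shows "a_m 1 n = card (int_partitions n)"
proof -
  have "P \<noteq> {#} \<and> 1 \<le> count P (Min (set_mset P))"
    if "sum_mset P = n" for P :: "nat multiset"
  proof -
    have "P \<noteq> {#}"
      using that assms by auto
    then show ?thesis
      using Min_in[of "set_mset P"] by (simp add: Suc_le_eq)
  qed
  then have "{P \<in> int_partitions n. P \<noteq> {#} \<and> 1 \<le> count P (Min (set_mset P))}
               = int_partitions n"
    by (auto simp: int_partitions_def)
  then show ?thesis
    by (simp add: a_m_def)
qed

lemma alternating_sum_prod_Suc_Suc:
  fixes c :: "nat \<Rightarrow> 'a::comm_ring_1"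
  shows "(\<Sum>k<Suc (Suc j). (-1) ^ k * (\<Prod>i<k. c (Suc j - i)))
           = 1 - c (Suc j) * (\<Sum>k<Suc j. (-1) ^ k * (\<Prod>i<k. c (j - i)))"
proof -
  have prod: "(\<Prod>i<Suc k. c (Suc j - i)) = c (Suc j) * (\<Prod>i<k. c (j - i))" for k
    by (subst prod.lessThan_Suc_shift) simp
  have summand: "(-1) ^ Suc k * (\<Prod>i<Suc k. c (Suc j - i))
                = - (c (Suc j) * ((-1) ^ k * (\<Prod>i<k. c (j - i))))" for k
    unfolding prod by simp
  have "(\<Sum>k<Suc (Suc j). (-1) ^ k * (\<Prod>i<k. c (Suc j - i)))
          = 1 + (\<Sum>k<Suc j. (-1) ^ Suc k * (\<Prod>i<Suc k. c (Suc j - i)))"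
    by (subst sum.lessThan_Suc_shift) simp
  also have "\<dots> = 1 - c (Suc j) * (\<Sum>k<Suc j. (-1) ^ k * (\<Prod>i<k. c (j - i)))"
    by (simp only: summand sum_negf sum_distrib_left diff_conv_add_uminus)
  finally show ?thesis .
qed

lemma F_m_Suc: "F_m (Suc j) = (\<Sum>k<Suc j. (-1) ^ k * (\<Prod>i<k. fls_X_inv ^ (j - i) - 1))"
  unfolding F_m_def
  by (subst sum.lessThan_Suc_shift)
    (simp add: sum.atLeast1_atMost_eq atLeast0AtMost lessThan_Suc_atMost[symmetric]
      del: sum.lessThan_Suc prod.lessThan_Suc)

lemma F_m_Suc_Suc: "F_m (Suc (Suc j)) = 1 - (fls_X_inv ^ Suc j - 1) * F_m (Suc j)"
  unfolding F_m_Suc by (rule alternating_sum_prod_Suc_Suc)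

lemma G_m_eq_F_m_mult_partition_fps: "G_m m = F_m m * fps_to_fls partition_fps"
proof -
  have "fps_to_fls qq_inf * fps_to_fls partition_fps = 1"
    by (simp flip: fls_times_fps_to_fls add: qq_inf_mult_partition_fps)
  then have "inverse (fps_to_fls qq_inf) = fps_to_fls partition_fps"
    by (rule inverse_unique)
  then show ?thesis
    by (simp add: G_m_def divide_inverse)
qed

lemma fls_nth_G_m_Suc_Suc:
  "G_m (Suc (Suc j)) $$ n
     = fps_to_fls partition_fps $$ n - G_m (Suc j) $$ (n + int (Suc j)) + G_m (Suc j) $$ n"
proof -
  have "G_m (Suc (Suc j))
          = fps_to_fls partition_fps - fls_X_inv ^ Suc j * G_m (Suc j) + G_m (Suc j)"
    unfolding G_m_eq_F_m_mult_partition_fps F_m_Suc_Suc by (simp add: algebra_simps)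
  then show ?thesis
    by (simp only: fls_X_inv_power_times_conv_shift fls_plus_nth fls_minus_nth fls_shift_nth)
qed

lemma fls_nth_G_m: "1 \<le> n \<Longrightarrow> G_m (Suc j) $$ n = of_nat (a_m (Suc j) (nat n))"
proof (induction j arbitrary: n)
  case 0
  then show ?case
    by (simp add: G_m_eq_F_m_mult_partition_fps F_m_def partition_fps_def
        a_m_1[unfolded One_nat_def])
next
  case (Suc j)
  have rec: "a_m (Suc j) (nat n + Suc j) + a_m (Suc (Suc j)) (nat n)
               = card (int_partitions (nat n)) + a_m (Suc j) (nat n)"
    by (rule a_m_recurrence) simp
  have "G_m (Suc (Suc j)) $$ n = of_nat (card (int_partitions (nat n)))
          - of_nat (a_m (Suc j) (nat n + Suc j)) + of_nat (a_m (Suc j) (nat n))"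
    using Suc by (simp add: fls_nth_G_m_Suc_Suc partition_fps_def nat_add_distrib)
  also have "\<dots> = of_nat (a_m (Suc (Suc j)) (nat n))"
    using arg_cong[OF rec, of "of_nat :: nat \<Rightarrow> rat"] by simp
  finally show ?case .
qed

lemma fls_nth_D_m: "D_m m $$ n = (if n \<le> 0 then G_m m $$ n else 0)"
proof -
  obtain N where "\<forall>n<N. G_m m $$ n = 0"
    by (rule fls_nth_vanishes_belowE)
  then show ?thesis
    unfolding D_m_def by (intro nth_Abs_fls_lower_bound[of N]) simp
qed

theorem theorem3p3:
  fixes m :: nat
  assumes "1 \<le> m"
  shows "Abs_fls (\<lambda>n::int. if 1 \<le> n then of_nat (a_m m (nat n)) else (0::rat))
           = G_m m - D_m m"
proof (rule fls_eqI)
  fix n :: int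
  obtain j where m: "m = Suc j"
    using assms by (cases m) auto
  have "Abs_fls (\<lambda>n::int. if 1 \<le> n then of_nat (a_m m (nat n)) else (0::rat)) $$ n
          = (if 1 \<le> n then of_nat (a_m m (nat n)) else 0)"
    by (rule nth_Abs_fls_lower_bound[of 1]) simp
  then show "Abs_fls (\<lambda>n::int. if 1 \<le> n then of_nat (a_m m (nat n)) else (0::rat)) $$ n
               = (G_m m - D_m m) $$ n"
    using fls_nth_G_m[of n j] by (simp add: m fls_nth_D_m)
qed

end
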